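(* Let $\mathfrak{S}=(\mathcal{X},\mathsf{S},\gamma,(\Lambda_{a})_{a\in\mathcal{A}})$ be a spectral decomposition system for the Euclidean space $\mathfrak{H}$ and let $\varphi\colon\mathcal{X}\to[-\infty,+\infty]$ be $\mathsf{S}$-invariant. Then: (i) $\overline{\varphi\circ\gamma}=\overline{\varphi}\circ\gamma$; (ii) for every $X\in\mathfrak{H}$, $\varphi\circ\gamma$ is lower semicontinuous at $X$ if and only if $\varphi$ is lower semicontinuous at $\gamma(X)$; (iii) $\varphi\circ\gamma$ is lower semicontinuous if and only if $\varphi$ is lower semicontinuous.
   Context: A Euclidean space is a finite-dimensional real inner product space; inner products are written $\langle\cdot,\cdot\rangle$ and norms $\|\cdot\|$. Let $\mathfrak{H}$ and $\mathcal{X}$ be Euclidean spaces, let $\mathsf{S}$ be a group acting on $\mathcal{X}$ by linear isometries, let $\gamma\colon\mathfrak{H}\to\mathcal{X}$, and let $(\Lambda_a)_{a\in\mathcal{A}}$ be a family of linear operators from $\mathcal{X}$ to $\mathfrak{H}$. The orbit of $x$ is $\mathsf{S}\cdot x=\{s\cdot x: s\in\mathsf{S}\}$; a map $f$ on $\mathcal{X}$ is $\mathsf{S}$-invariant if $f(s\cdot x)=f(x)$ for all $s,x$. The tuple is a spectral decomposition system for $\mathfrak{H}$ if: [A] every $\Lambda_a$ is an isometry; [B] there exists an $\mathsf{S}$-invariant $\tau\colon\mathcal{X}\to\mathcal{X}$ with $\tau(x)\in\mathsf{S}\cdot x$ for all $x$ and $\gamma\circ\Lambda_a=\tau$ for all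 $a$; [C] for every $X\in\mathfrak{H}$ there is $a$ with $X=\Lambda_a\gamma(X)$; [D] $\langle X,Y\rangle\leq\langle\gamma(X),\gamma(Y)\rangle$ for all $X,Y\in\mathfrak{H}$. For a function $f\colon\mathcal{H}\to[-\infty,+\infty]$, $\overline{f}$ denotes its lower semicontinuous envelope, i.e. the pointwise supremum of all lower semicontinuous functions $g\colon\mathcal{H}\to[-\infty,+\infty]$ with $g\leq f$. *)

theory Defs
  imports "HOL-Analysis.Analysis"
begin

text \<open>A group of linear isometries of 'x, represented concretely as a set of maps
  (the action s . x is function application s x).\<close>
definition linear_isometry_group :: "('x::euclidean_space \<Rightarrow> 'x) set \<Rightarrow> bool" where
  "linear_isometry_group S \<longleftrightarrow>
     id \<in> S \<and> (\<forall>s\<in>S. \<forall>t\<in>S. s \<circ> t \<in> S) \<and>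
     (\<forall>s\<in>S. \<exists>t\<in>S. s \<circ> t = id \<and> t \<circ> s = id) \<and>
     (\<forall>s\<in>S. linear s \<and> (\<forall>x. norm (s x) = norm x))"

definition orbit :: "('x \<Rightarrow> 'x) set \<Rightarrow> 'x \<Rightarrow> 'x set" where
  "orbit S x = (\<lambda>s. s x) ` S"

definition S_invariant :: "('x \<Rightarrow> 'x) set \<Rightarrow> ('x \<Rightarrow> 'b) \<Rightarrow> bool" where
  "S_invariant S f \<longleftrightarrow> (\<forall>s\<in>S. \<forall>x. f (s x) = f x)"

definition spectral_decomposition_system ::
  "('x::euclidean_space \<Rightarrow> 'x) set \<Rightarrow> ('h::euclidean_space \<Rightarrow> 'x) \<Rightarrow> 'a set \<Rightarrow> ('a \<Rightarrow> 'x \<Rightarrow> 'h) \<Rightarrow> bool" where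
  "spectral_decomposition_system S \<gamma> A \<Lambda> \<longleftrightarrow>
     linear_isometry_group S \<and>
     (\<forall>a\<in>A. linear (\<Lambda> a) \<and> (\<forall>x. norm (\<Lambda> a x) = norm x)) \<and>
     (\<exists>\<tau>. S_invariant S \<tau> \<and> (\<forall>x. \<tau> x \<in> orbit S x) \<and> (\<forall>a\<in>A. \<gamma> \<circ> \<Lambda> a = \<tau>)) \<and>
     (\<forall>X. \<exists>a\<in>A. X = \<Lambda> a (\<gamma> X)) \<and>
     (\<forall>X Y. inner X Y \<le> inner (\<gamma> X) (\<gamma> Y))"

definition lsc_at :: "('x::topological_space \<Rightarrow> ereal) \<Rightarrow> 'x \<Rightarrow> bool" where
  "lsc_at f x \<longleftrightarrow> (\<forall>t. t < f x \<longrightarrow> (\<forall>\<^sub>F y in nhds x. t < f y))"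

definition lsc :: "('x::topological_space \<Rightarrow> ereal) \<Rightarrow> bool" where
  "lsc f \<longleftrightarrow> (\<forall>x. lsc_at f x)"

definition lsc_envelope :: "('x::topological_space \<Rightarrow> ereal) \<Rightarrow> 'x \<Rightarrow> ereal" where
  "lsc_envelope f x = (SUP g \<in> {g. lsc g \<and> (\<forall>y. g y \<le> f y)}. g x)"

end

theory Submission
  imports Defs
begin

text \<open>The map \<open>\<gamma>\<close> is nonexpansive, hence continuous, and so is every \<open>\<Lambda> a\<close>.  Invariance
  of \<open>\<phi>\<close> under \<open>S\<close> gives \<open>(\<phi> \<circ> \<gamma>) \<circ> \<Lambda> a = \<phi>\<close>, so each of \<open>\<phi>\<close> and \<open>\<phi> \<circ> \<gamma>\<close> arises from the
  other by precomposition with a continuous map.  Lower semicontinuity (at a point) and lower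
  semicontinuous minorants are stable under such precomposition, and \<open>X = \<Lambda> a (\<gamma> X)\<close> for
  a suitable \<open>a\<close> lets one return from \<open>\<gamma> X\<close> to \<open>X\<close>.\<close>

lemma lsc_at_compose:
  assumes "lsc_at f (g x)" and "isCont g x"
  shows "lsc_at (f \<circ> g) x"
  unfolding lsc_at_def
proof (intro allI impI)
  fix t assume "t < (f \<circ> g) x"
  then have "\<forall>\<^sub>F y in nhds (g x). t < f y"
    using assms(1) unfolding lsc_at_def by simp
  moreover have "filterlim g (nhds (g x)) (nhds x)"
    using assms(2) by (simp add: isCont_def tendsto_at_iff_tendsto_nhds)
  ultimately show "\<forall>\<^sub>F y in nhds x. t < (f \<circ> g) y"
    unfolding comp_def by (rule eventually_compose_filterlim)
qed

lemma lsc_compose: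
  assumes "lsc f" and "\<And>x. isCont g x"
  shows "lsc (f \<circ> g)"
  using assms lsc_at_compose unfolding lsc_def by blast

lemma lsc_envelope_compose_le:
  assumes "\<And>x. isCont g x"
  shows "lsc_envelope f (g x) \<le> lsc_envelope (f \<circ> g) x"
  unfolding lsc_envelope_def
proof (rule SUP_least)
  fix h assume "h \<in> {h. lsc h \<and> (\<forall>y. h y \<le> f y)}"
  then have "h \<circ> g \<in> {h. lsc h \<and> (\<forall>y. h y \<le> (f \<circ> g) y)}"
    using assms lsc_compose by auto
  then have "(h \<circ> g) x \<le> (SUP h \<in> {h. lsc h \<and> (\<forall>y. h y \<le> (f \<circ> g) y)}. h x)"
    by (rule SUP_upper)
  then show "h (g x) \<le> (SUP h \<in> {h. lsc h \<and> (\<forall>y. h y \<le> (f \<circ> g) y)}. h x)"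
    by simp
qed

lemma lipschitz_on_if_norm_eq_inner_le:
  fixes \<gamma> :: "'a::real_inner \<Rightarrow> 'b::real_inner"
  assumes norm_eq: "\<And>X. norm (\<gamma> X) = norm X"
    and inner_le: "\<And>X Y. inner X Y \<le> inner (\<gamma> X) (\<gamma> Y)"
  shows "1-lipschitz_on U \<gamma>"
proof (rule lipschitz_onI)
  fix X Y
  have "(norm (\<gamma> X - \<gamma> Y))\<^sup>2 = (norm (\<gamma> X))\<^sup>2 + (norm (\<gamma> Y))\<^sup>2 - 2 * inner (\<gamma> X) (\<gamma> Y)"
    by (simp add: power2_norm_eq_inner inner_diff_left inner_diff_right inner_commute)
  also have "\<dots> \<le> (norm X)\<^sup>2 + (norm Y)\<^sup>2 - 2 * inner X Y"
    using norm_eq inner_le[of X Y] by simp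
  also have "\<dots> = (norm (X - Y))\<^sup>2"
    by (simp add: power2_norm_eq_inner inner_diff_left inner_diff_right inner_commute)
  finally have "norm (\<gamma> X - \<gamma> Y) \<le> norm (X - Y)"
    using power2_le_imp_le norm_ge_zero by blast
  then show "dist (\<gamma> X) (\<gamma> Y) \<le> 1 * dist X Y"
    by (simp add: dist_norm)
qed simp

lemma spectral_decomposition_system_norm_gamma:
  assumes "spectral_decomposition_system S \<gamma> A \<Lambda>"
  shows "norm (\<gamma> X) = norm X"
proof -
  obtain a where "a \<in> A" "X = \<Lambda> a (\<gamma> X)"
    using assms unfolding spectral_decomposition_system_def by blast
  then show ?thesis
    using assms unfolding spectral_decomposition_system_def by metis
qed

lemma spectral_decomposition_system_isCont_gamma:
  assumes "spectral_decomposition_system S \<gamma> A \<Lambda>"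
  shows "isCont \<gamma> X"
proof -
  have "1-lipschitz_on UNIV \<gamma>"
    using spectral_decomposition_system_norm_gamma[OF assms] assms
    by (intro lipschitz_on_if_norm_eq_inner_le) (auto simp: spectral_decomposition_system_def)
  then show ?thesis
    using lipschitz_on_continuous_on continuous_on_eq_continuous_at open_UNIV by blast
qed

lemma spectral_decomposition_system_isCont_Lambda:
  assumes "spectral_decomposition_system S \<gamma> A \<Lambda>" and "a \<in> A"
  shows "isCont (\<Lambda> a) x"
  using assms by (simp add: spectral_decomposition_system_def linear_continuous_at
      linear_conv_bounded_linear)

lemma spectral_decomposition_system_invariant_compose:
  assumes "spectral_decomposition_system S \<gamma> A \<Lambda>" and "S_invariant S \<phi>" and "a \<in> A"
  shows "(\<phi> \<circ> \<gamma>) \<circ> \<Lambda> a = \<phi>"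
proof
  fix x
  obtain \<tau> where "\<tau> x \<in> orbit S x" and "\<gamma> \<circ> \<Lambda> a = \<tau>"
    using assms(1,3) unfolding spectral_decomposition_system_def by blast
  then obtain s where "s \<in> S" "\<gamma> (\<Lambda> a x) = s x"
    unfolding orbit_def by (auto simp: comp_def)
  then show "((\<phi> \<circ> \<gamma>) \<circ> \<Lambda> a) x = \<phi> x"
    using assms(2) unfolding S_invariant_def by simp
qed

theorem proposition4p5:
  fixes S :: "('x::euclidean_space \<Rightarrow> 'x) set"
    and \<gamma> :: "'h::euclidean_space \<Rightarrow> 'x"
    and A :: "'a set"
    and \<Lambda> :: "'a \<Rightarrow> 'x \<Rightarrow> 'h"
    and \<phi> :: "'x \<Rightarrow> ereal"
  assumes "spectral_decomposition_system S \<gamma> A \<Lambda>"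
    and "S_invariant S \<phi>"
  shows "lsc_envelope (\<phi> \<circ> \<gamma>) = lsc_envelope \<phi> \<circ> \<gamma>
         \<and> (\<forall>X. lsc_at (\<phi> \<circ> \<gamma>) X \<longleftrightarrow> lsc_at \<phi> (\<gamma> X))
         \<and> (lsc (\<phi> \<circ> \<gamma>) \<longleftrightarrow> lsc \<phi>)"
proof -
  have \<gamma>_cont: "\<And>X. isCont \<gamma> X"
    using assms(1) by (rule spectral_decomposition_system_isCont_gamma)
  have \<Lambda>_cont: "\<And>a x. a \<in> A \<Longrightarrow> isCont (\<Lambda> a) x"
    using assms(1) by (rule spectral_decomposition_system_isCont_Lambda)
  have recover: "\<And>a. a \<in> A \<Longrightarrow> (\<phi> \<circ> \<gamma>) \<circ> \<Lambda> a = \<phi>"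
    using assms by (rule spectral_decomposition_system_invariant_compose)
  have decompose: "\<And>X. \<exists>a\<in>A. \<Lambda> a (\<gamma> X) = X"
    using assms(1) unfolding spectral_decomposition_system_def by metis
  have "lsc_envelope (\<phi> \<circ> \<gamma>) X = lsc_envelope \<phi> (\<gamma> X)" for X
  proof (rule antisym)
    obtain a where "a \<in> A" and X_eq: "\<Lambda> a (\<gamma> X) = X"
      using decompose by blast
    then show "lsc_envelope (\<phi> \<circ> \<gamma>) X \<le> lsc_envelope \<phi> (\<gamma> X)"
      using lsc_envelope_compose_le[of "\<Lambda> a" "\<phi> \<circ> \<gamma>" "\<gamma> X"] \<Lambda>_cont recover X_eq by simp
  qed (rule lsc_envelope_compose_le[OF \<gamma>_cont])
  moreover have "lsc_at (\<phi> \<circ> \<gamma>) X \<longleftrightarrow> lsc_at \<phi> (\<gamma> X)" for X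
  proof
    obtain a where "a \<in> A" and X_eq: "\<Lambda> a (\<gamma> X) = X"
      using decompose by blast
    then show "lsc_at (\<phi> \<circ> \<gamma>) X \<Longrightarrow> lsc_at \<phi> (\<gamma> X)"
      using lsc_at_compose[of "\<phi> \<circ> \<gamma>" "\<Lambda> a" "\<gamma> X"] \<Lambda>_cont recover X_eq by simp
  qed (rule lsc_at_compose[OF _ \<gamma>_cont])
  moreover have "lsc (\<phi> \<circ> \<gamma>) \<longleftrightarrow> lsc \<phi>"
  proof
    obtain a where "a \<in> A"
      using decompose by blast
    then show "lsc (\<phi> \<circ> \<gamma>) \<Longrightarrow> lsc \<phi>"
      using lsc_compose[of "\<phi> \<circ> \<gamma>" "\<Lambda> a"] \<Lambda>_cont recover by simp
  qed (rule lsc_compose[OF _ \<gamma>_cont])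
  ultimately show ?thesis
    by auto
qed

end
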